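(* Let $(G,\cdot)$ be a group of nilpotence class (at most) two. For $\psi\in\operatorname{End}(G)$ define $g\circ_\psi h=g\cdot\psi(g)\cdot h\cdot\psi(g)^{-1}$. Then $(\circ_\psi:\psi\in\operatorname{End}(G))$ is a brace block on $G$.
   Context: A skew brace is a triple $(G,\cdot,\circ)$ where $(G,\cdot)$ and $(G,\circ)$ are groups and $g\circ(h\cdot k)=(g\circ h)\cdot g^{-1}\cdot(g\circ k)$ for all $g,h,k$. A bi-skew brace is a triple $(G,\cdot,\circ)$ such that both $(G,\cdot,\circ)$ and $(G,\circ,\cdot)$ are skew braces. A brace block on a set $G$ is a family $\mathcal{F}$ of group operations on $G$ such that $(G,\circ,\diamond)$ is a bi-skew brace for all $\circ,\diamond\in\mathcal{F}$. *)

theory Defs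
  imports "HOL-Algebra.Group"
begin

definition group_of :: "'a set \<Rightarrow> ('a \<Rightarrow> 'a \<Rightarrow> 'a) \<Rightarrow> 'a monoid" where
  "group_of S op = \<lparr>carrier = S, mult = op,
     one = (THE e. e \<in> S \<and> (\<forall>x\<in>S. op e x = x \<and> op x e = x))\<rparr>"

definition is_group_op :: "'a set \<Rightarrow> ('a \<Rightarrow> 'a \<Rightarrow> 'a) \<Rightarrow> bool" where
  "is_group_op S op \<longleftrightarrow> group (group_of S op)"

definition skew_brace :: "'a set \<Rightarrow> ('a \<Rightarrow> 'a \<Rightarrow> 'a) \<Rightarrow> ('a \<Rightarrow> 'a \<Rightarrow> 'a) \<Rightarrow> bool" where
  "skew_brace S dot circ \<longleftrightarrow> is_group_op S dot \<and> is_group_op S circ \<and>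
     (\<forall>g\<in>S. \<forall>h\<in>S. \<forall>k\<in>S.
        circ g (dot h k) = dot (dot (circ g h) (inv\<^bsub>group_of S dot\<^esub> g)) (circ g k))"

definition bi_skew_brace :: "'a set \<Rightarrow> ('a \<Rightarrow> 'a \<Rightarrow> 'a) \<Rightarrow> ('a \<Rightarrow> 'a \<Rightarrow> 'a) \<Rightarrow> bool" where
  "bi_skew_brace S dot circ \<longleftrightarrow> skew_brace S dot circ \<and> skew_brace S circ dot"

definition brace_block :: "'a set \<Rightarrow> ('a \<Rightarrow> 'a \<Rightarrow> 'a) set \<Rightarrow> bool" where
  "brace_block S F \<longleftrightarrow> (\<forall>op\<in>F. is_group_op S op) \<and>
     (\<forall>op1\<in>F. \<forall>op2\<in>F. bi_skew_brace S op1 op2)"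

text \<open>Nilpotence class at most two: every commutator is central.\<close>
definition nilpotent_class_le2 :: "('a, 'b) monoid_scheme \<Rightarrow> bool" where
  "nilpotent_class_le2 G \<longleftrightarrow> (\<forall>x\<in>carrier G. \<forall>y\<in>carrier G. \<forall>z\<in>carrier G.
     (inv\<^bsub>G\<^esub> x \<otimes>\<^bsub>G\<^esub> inv\<^bsub>G\<^esub> y \<otimes>\<^bsub>G\<^esub> x \<otimes>\<^bsub>G\<^esub> y) \<otimes>\<^bsub>G\<^esub> z
     = z \<otimes>\<^bsub>G\<^esub> (inv\<^bsub>G\<^esub> x \<otimes>\<^bsub>G\<^esub> inv\<^bsub>G\<^esub> y \<otimes>\<^bsub>G\<^esub> x \<otimes>\<^bsub>G\<^esub> y))"

definition circ_psi :: "('a, 'b) monoid_scheme \<Rightarrow> ('a \<Rightarrow> 'a) \<Rightarrow> 'a \<Rightarrow> 'a \<Rightarrow> 'a" where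
  "circ_psi G \<psi> g h = g \<otimes>\<^bsub>G\<^esub> \<psi> g \<otimes>\<^bsub>G\<^esub> h \<otimes>\<^bsub>G\<^esub> inv\<^bsub>G\<^esub> (\<psi> g)"

end

theory Submission imports Defs begin

text \<open>Write \<open>g \<circ>\<^sub>\<psi> h = g \<cdot> c\<^bsub>\<psi> g\<^esub>(h)\<close>, where \<open>c\<^sub>a\<close> is conjugation by \<open>a\<close>. In a group of
  class two, \<open>c\<^sub>a\<close> only depends on \<open>a\<close> modulo the centre, so inner automorphisms commute and
  \<open>c\<^bsub>c\<^sub>a(b)\<^esub> = c\<^sub>b\<close>. Hence \<open>g \<mapsto> c\<^bsub>\<psi> g\<^esub>\<close> is a homomorphism from \<open>(G,\<circ>\<^sub>\<psi>)\<close> to an abelian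
  group of automorphisms of \<open>(G,\<cdot>)\<close>, which makes \<open>\<circ>\<^sub>\<psi>\<close> a group operation with identity \<open>1\<close>
  and inverses \<open>c\<^bsub>\<psi> g\<^esub>\<^sup>-\<^sup>1(g\<^sup>-\<^sup>1)\<close>. The brace identity for \<open>\<circ>\<^sub>\<psi>\<close> and \<open>\<circ>\<^sub>\<phi>\<close> then reduces to the
  commutation of \<open>c\<^bsub>\<phi> g\<^esub>\<close> and \<open>c\<^bsub>\<psi> h\<^esub>\<close>.\<close>

lemma carrier_group_of [simp]: "carrier (group_of S op) = S"
  and mult_group_of [simp]: "mult (group_of S op) = op"
  by (simp_all add: group_of_def)

lemma one_group_of_eq:
  assumes "e \<in> S" and "\<And>x. x \<in> S \<Longrightarrow> op e x = x \<and> op x e = x"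
  shows "\<one>\<^bsub>group_of S op\<^esub> = e"
proof -
  have "(THE e'. e' \<in> S \<and> (\<forall>x\<in>S. op e' x = x \<and> op x e' = x)) = e"
  proof (rule the_equality)
    fix e' assume "e' \<in> S \<and> (\<forall>x\<in>S. op e' x = x \<and> op x e' = x)"
    then show "e' = e" using assms by metis
  qed (use assms in blast)
  then show ?thesis by (simp add: group_of_def)
qed

lemma is_group_opI:
  assumes "\<And>x y. x \<in> S \<Longrightarrow> y \<in> S \<Longrightarrow> op x y \<in> S"
    and "\<And>x y z. x \<in> S \<Longrightarrow> y \<in> S \<Longrightarrow> z \<in> S \<Longrightarrow> op (op x y) z = op x (op y z)"
    and neutral: "e \<in> S" "\<And>x. x \<in> S \<Longrightarrow> op e x = x \<and> op x e = x"
    and "\<And>x. x \<in> S \<Longrightarrow> \<exists>y\<in>S. op y x = e"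
  shows "is_group_op S op"
  unfolding is_group_op_def
  by (rule groupI) (simp_all add: one_group_of_eq[OF neutral] assms)

lemma inv_group_of_eq:
  assumes "is_group_op S op" and "x \<in> S" "y \<in> S" and "op x y = \<one>\<^bsub>group_of S op\<^esub>"
  shows "inv\<^bsub>group_of S op\<^esub> x = y"
proof -
  interpret group "group_of S op" using assms(1) by (simp add: is_group_op_def)
  have "x \<otimes>\<^bsub>group_of S op\<^esub> y = \<one>\<^bsub>group_of S op\<^esub>" using assms(4) by simp
  then have "y \<otimes>\<^bsub>group_of S op\<^esub> x = \<one>\<^bsub>group_of S op\<^esub>"
    by (rule inv_comm) (use assms in simp_all)
  then show ?thesis by (rule inv_equality) (use assms in simp_all)
qed

definition conj_by :: "('a, 'b) monoid_scheme \<Rightarrow> 'a \<Rightarrow> 'a \<Rightarrow> 'a" where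
  "conj_by G a h = a \<otimes>\<^bsub>G\<^esub> h \<otimes>\<^bsub>G\<^esub> inv\<^bsub>G\<^esub> a"

context group
begin

lemma inv_mult_cancel_left: "x \<in> carrier G \<Longrightarrow> y \<in> carrier G \<Longrightarrow> inv x \<otimes> (x \<otimes> y) = y"
  by (simp flip: m_assoc)

lemma mult_inv_cancel_left: "x \<in> carrier G \<Longrightarrow> y \<in> carrier G \<Longrightarrow> x \<otimes> (inv x \<otimes> y) = y"
  by (simp flip: m_assoc)

lemma conj_by_closed [simp]: "a \<in> carrier G \<Longrightarrow> h \<in> carrier G \<Longrightarrow> conj_by G a h \<in> carrier G"
  by (simp add: conj_by_def)

lemma conj_by_mult:
  "\<lbrakk>a \<in> carrier G; h \<in> carrier G; k \<in> carrier G\<rbrakk>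
    \<Longrightarrow> conj_by G a (h \<otimes> k) = conj_by G a h \<otimes> conj_by G a k"
  by (simp add: conj_by_def m_assoc inv_mult_cancel_left)

lemma conj_by_inv: "a \<in> carrier G \<Longrightarrow> h \<in> carrier G \<Longrightarrow> conj_by G a (inv h) = inv (conj_by G a h)"
  by (simp add: conj_by_def m_assoc inv_mult_group)

lemma conj_by_mult_left:
  "\<lbrakk>a \<in> carrier G; b \<in> carrier G; h \<in> carrier G\<rbrakk>
    \<Longrightarrow> conj_by G (a \<otimes> b) h = conj_by G a (conj_by G b h)"
  by (simp add: conj_by_def m_assoc inv_mult_group)

lemma conj_by_inv_cancel:
  "a \<in> carrier G \<Longrightarrow> h \<in> carrier G \<Longrightarrow> conj_by G a (conj_by G (inv a) h) = h"
  by (simp add: conj_by_def m_assoc mult_inv_cancel_left)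

lemma endo_inv: "\<psi> \<in> hom G G \<Longrightarrow> x \<in> carrier G \<Longrightarrow> \<psi> (inv x) = inv (\<psi> x)"
  using group_hom.hom_inv[of G G \<psi>] by (simp add: group_hom_def group_hom_axioms_def is_group)

lemma endo_conj_by:
  "\<lbrakk>\<psi> \<in> hom G G; a \<in> carrier G; b \<in> carrier G\<rbrakk>
    \<Longrightarrow> \<psi> (conj_by G a b) = conj_by G (\<psi> a) (\<psi> b)"
  by (simp add: conj_by_def hom_mult hom_in_carrier endo_inv)

lemma circ_psi_conj_by:
  "\<lbrakk>\<psi> \<in> hom G G; g \<in> carrier G; h \<in> carrier G\<rbrakk> \<Longrightarrow> circ_psi G \<psi> g h = g \<otimes> conj_by G (\<psi> g) h"
  by (simp add: circ_psi_def conj_by_def m_assoc hom_in_carrier)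

end

locale class_two_group = group +
  assumes class_two: "nilpotent_class_le2 G"
begin

lemma commutator_central:
  "\<lbrakk>a \<in> carrier G; b \<in> carrier G; x \<in> carrier G\<rbrakk>
    \<Longrightarrow> (a \<otimes> b \<otimes> inv a \<otimes> inv b) \<otimes> x = x \<otimes> (a \<otimes> b \<otimes> inv a \<otimes> inv b)"
  using class_two[unfolded nilpotent_class_le2_def, rule_format, of "inv a" "inv b" x] by simp

lemma conj_by_conj_by:
  assumes a: "a \<in> carrier G" and b: "b \<in> carrier G" and h: "h \<in> carrier G"
  shows "conj_by G (conj_by G a b) h = conj_by G b h"
proof -
  define z where "z = a \<otimes> b \<otimes> inv a \<otimes> inv b"
  have z: "z \<in> carrier G" using a b by (simp add: z_def)
  have "conj_by G a b = z \<otimes> b" using a b by (simp add: z_def conj_by_def m_assoc)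
  then have "conj_by G (conj_by G a b) h = z \<otimes> conj_by G b h \<otimes> inv z"
    using b h z by (simp add: conj_by_mult_left conj_by_def m_assoc inv_mult_group)
  also have "\<dots> = conj_by G b h \<otimes> z \<otimes> inv z"
    using commutator_central[OF a b, of "conj_by G b h"] b h by (simp add: z_def)
  finally show ?thesis using b h z by (simp add: m_assoc)
qed

lemma conj_by_commute:
  assumes a: "a \<in> carrier G" and b: "b \<in> carrier G" and h: "h \<in> carrier G"
  shows "conj_by G a (conj_by G b h) = conj_by G b (conj_by G a h)"
proof -
  have "a \<otimes> b = conj_by G a b \<otimes> a" using a b by (simp add: conj_by_def m_assoc)
  then show ?thesis
    using a b h by (metis conj_by_closed conj_by_conj_by conj_by_mult_left)
qed

lemma conj_by_conj_by_inv_cancel: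
  "\<lbrakk>a \<in> carrier G; b \<in> carrier G; h \<in> carrier G\<rbrakk>
    \<Longrightarrow> conj_by G a (conj_by G b (conj_by G (inv a) h)) = conj_by G b h"
  by (simp add: conj_by_commute[of a b] conj_by_inv_cancel)

lemma conj_by_endo_circ:
  "\<lbrakk>\<psi> \<in> hom G G; a \<in> carrier G; g \<in> carrier G; h \<in> carrier G; x \<in> carrier G\<rbrakk>
    \<Longrightarrow> conj_by G (\<psi> (g \<otimes> conj_by G a h)) x = conj_by G (\<psi> g) (conj_by G (\<psi> h) x)"
  by (simp add: hom_mult hom_in_carrier endo_conj_by conj_by_mult_left conj_by_conj_by)

lemma circ_psi_closed:
  "\<lbrakk>\<psi> \<in> hom G G; g \<in> carrier G; h \<in> carrier G\<rbrakk> \<Longrightarrow> circ_psi G \<psi> g h \<in> carrier G"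
  by (simp add: circ_psi_conj_by hom_in_carrier)

lemma circ_psi_assoc:
  "\<lbrakk>\<psi> \<in> hom G G; x \<in> carrier G; y \<in> carrier G; z \<in> carrier G\<rbrakk>
    \<Longrightarrow> circ_psi G \<psi> (circ_psi G \<psi> x y) z = circ_psi G \<psi> x (circ_psi G \<psi> y z)"
  by (simp add: circ_psi_conj_by circ_psi_closed hom_in_carrier conj_by_endo_circ conj_by_mult
      m_assoc)

lemma circ_psi_one:
  "\<lbrakk>\<psi> \<in> hom G G; x \<in> carrier G\<rbrakk> \<Longrightarrow> circ_psi G \<psi> \<one> x = x \<and> circ_psi G \<psi> x \<one> = x"
  by (simp add: circ_psi_conj_by hom_one[OF _ is_group is_group] conj_by_def hom_in_carrier)

lemma circ_psi_left_inverse: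
  assumes \<psi>: "\<psi> \<in> hom G G" and x: "x \<in> carrier G"
  shows "circ_psi G \<psi> (inv (conj_by G (inv (\<psi> x)) x)) x = \<one>"
proof -
  have "\<psi> (inv (conj_by G (inv (\<psi> x)) x)) = conj_by G (inv (\<psi> (\<psi> x))) (inv (\<psi> x))"
    using \<psi> x by (simp add: endo_inv endo_conj_by hom_in_carrier conj_by_inv)
  then have "conj_by G (\<psi> (inv (conj_by G (inv (\<psi> x)) x))) x = conj_by G (inv (\<psi> x)) x"
    using \<psi> x by (simp add: hom_in_carrier conj_by_conj_by)
  then show ?thesis using \<psi> x by (simp add: circ_psi_conj_by hom_in_carrier)
qed

lemma is_group_op_circ_psi:
  assumes \<psi>: "\<psi> \<in> hom G G"
  shows "is_group_op (carrier G) (circ_psi G \<psi>)"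
proof (rule is_group_opI)
  fix x assume x: "x \<in> carrier G"
  show "\<exists>y\<in>carrier G. circ_psi G \<psi> y x = \<one>"
    using circ_psi_left_inverse[OF \<psi> x] \<psi> x
    by (intro bexI[of _ "inv (conj_by G (inv (\<psi> x)) x)"]) (simp_all add: hom_in_carrier)
qed (simp_all add: \<psi> circ_psi_closed circ_psi_assoc circ_psi_one)

lemma one_circ_psi: "\<psi> \<in> hom G G \<Longrightarrow> \<one>\<^bsub>group_of (carrier G) (circ_psi G \<psi>)\<^esub> = \<one>"
  by (simp add: one_group_of_eq circ_psi_one)

lemma inv_circ_psi:
  "\<lbrakk>\<psi> \<in> hom G G; g \<in> carrier G\<rbrakk>
    \<Longrightarrow> inv\<^bsub>group_of (carrier G) (circ_psi G \<psi>)\<^esub> g = conj_by G (inv (\<psi> g)) (inv g)"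
  by (rule inv_group_of_eq)
    (simp_all add: is_group_op_circ_psi one_circ_psi circ_psi_conj_by hom_in_carrier
      conj_by_inv_cancel)

lemma conj_by_endo_inv_circ_psi:
  "\<lbrakk>\<psi> \<in> hom G G; g \<in> carrier G; x \<in> carrier G\<rbrakk>
    \<Longrightarrow> conj_by G (\<psi> (inv\<^bsub>group_of (carrier G) (circ_psi G \<psi>)\<^esub> g)) x = conj_by G (inv (\<psi> g)) x"
  by (simp add: inv_circ_psi endo_conj_by endo_inv hom_in_carrier conj_by_conj_by)

lemma skew_brace_circ_psi:
  assumes \<psi>: "\<psi> \<in> hom G G" and \<phi>: "\<phi> \<in> hom G G"
  shows "skew_brace (carrier G) (circ_psi G \<psi>) (circ_psi G \<phi>)"
  unfolding skew_brace_def
proof (intro conjI ballI)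
  fix g h k assume g: "g \<in> carrier G" and h: "h \<in> carrier G" and k: "k \<in> carrier G"
  note in_G = g h k \<psi> \<phi> hom_in_carrier[OF \<psi>] hom_in_carrier[OF \<phi>]
  define g' where "g' = inv\<^bsub>group_of (carrier G) (circ_psi G \<psi>)\<^esub> g"
  define A where "A = circ_psi G \<phi> g h"
  define B where "B = circ_psi G \<psi> A g'"
  have g': "g' \<in> carrier G" and A: "A \<in> carrier G" and B: "B \<in> carrier G"
    using in_G by (simp_all add: g'_def A_def B_def inv_circ_psi circ_psi_closed)
  have A_eq: "A = g \<otimes> conj_by G (\<phi> g) h" using in_G by (simp add: A_def circ_psi_conj_by)
  have conj_A: "conj_by G (\<psi> A) x = conj_by G (\<psi> g) (conj_by G (\<psi> h) x)"
    if "x \<in> carrier G" for x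
    using in_G that by (simp add: A_eq conj_by_endo_circ)
  have B_eq: "B = A \<otimes> conj_by G (\<psi> h) (inv g)"
    using in_G A g' conj_A
    by (simp add: B_def circ_psi_conj_by g'_def inv_circ_psi conj_by_conj_by_inv_cancel)
  have conj_B: "conj_by G (\<psi> B) x = conj_by G (\<psi> h) x" if x: "x \<in> carrier G" for x
  proof -
    have "conj_by G (\<psi> B) x = conj_by G (\<psi> A) (conj_by G (\<psi> g') x)"
      using in_G A g' x by (simp add: B_def circ_psi_conj_by conj_by_endo_circ)
    also have "\<dots> = conj_by G (\<psi> h) x"
      using in_G x by (simp add: g'_def conj_by_endo_inv_circ_psi conj_A conj_by_conj_by_inv_cancel)
    finally show ?thesis .
  qed
  have "circ_psi G \<psi> B (circ_psi G \<phi> g k) = B \<otimes> conj_by G (\<psi> h) (g \<otimes> conj_by G (\<phi> g) k)"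
    using in_G B by (simp add: circ_psi_conj_by conj_B)
  also have "\<dots>
      = A \<otimes> (conj_by G (\<psi> h) (inv g) \<otimes> (conj_by G (\<psi> h) g \<otimes> conj_by G (\<psi> h) (conj_by G (\<phi> g) k)))"
    using in_G A by (simp add: conj_by_mult B_eq m_assoc)
  also have "\<dots> = A \<otimes> conj_by G (\<phi> g) (conj_by G (\<psi> h) k)"
    using in_G by (simp add: conj_by_inv inv_mult_cancel_left conj_by_commute[of "\<psi> h" "\<phi> g"])
  also have "\<dots> = circ_psi G \<phi> g (circ_psi G \<psi> h k)"
    using in_G by (simp add: circ_psi_conj_by conj_by_mult A_eq m_assoc)
  finally show "circ_psi G \<phi> g (circ_psi G \<psi> h k) = circ_psi G \<psi> (circ_psi G \<psi> (circ_psi G \<phi> g h)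
      (inv\<^bsub>group_of (carrier G) (circ_psi G \<psi>)\<^esub> g)) (circ_psi G \<phi> g k)"
    by (simp add: A_def B_def g'_def)
qed (simp_all add: \<psi> \<phi> is_group_op_circ_psi)

end

theorem mainTheorem9:
  fixes G :: "('a, 'b) monoid_scheme"
  assumes "group G"
    and "nilpotent_class_le2 G"
  shows "brace_block (carrier G) (circ_psi G ` hom G G)"
proof -
  interpret class_two_group G using assms by (simp add: class_two_group_def class_two_group_axioms_def)
  show ?thesis
    unfolding brace_block_def bi_skew_brace_def
    using is_group_op_circ_psi skew_brace_circ_psi by blast
qed

end
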